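(* Let $R$ be an associative ring with identity and $M$ a left $R$-module which is projective in $\sigma[M]$. Let $SP(M)=\{N\in\Lambda^{fi}(M)\mid N\text{ is semiprime in }M\}\cup\{M\}$, ordered by inclusion. Then $SP(M)$ is a frame. Moreover, $SP(M)\cong\mathcal{O}(LgSpec(M))$ canonically as frames.
   Context: $\Lambda^{fi}(M)$ is the set of fully invariant submodules of $M$. For $N,L\leq M$, $N_ML=\sum\{f(N)\mid f\in\mathrm{Hom}_R(M,L)\}$. A submodule $N\in\Lambda^{fi}(M)$ with $N\neq M$ is semiprime in $M$ if whenever $K\in\Lambda^{fi}(M)$ and $K_MK\subseteq N$, then $K\subseteq N$. $LgSpec(M)$ is the set of submodules $P\neq M$ such that for all $N,L\in\Lambda^{fi}(M)$, $N_ML\subseteq P$ implies $N\subseteq P$ or $L\subseteq P$, with topology whose open sets are $\mathcal{U}(N)=\{P\in LgSpec(M)\mid N\nsubseteq P\}$, $N\in\Lambda^{fi}(M)$; $\mathcal{O}(LgSpec(M))$ is its frame of open sets. A frame is a complete lattice in which finite meets distribute over arbitrary joins. *)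

theory Defs
  imports "HOL-Algebra.Module" "HOL-Algebra.Complete_Lattice" "HOL-Analysis.Abstract_Topology"
begin

text \<open>HOL-Algebra's locale module requires a commutative ring, so we state the
  left-module axioms directly, over an arbitrary associative unital ring R.\<close>

definition left_module :: "'r ring \<Rightarrow> ('r, 'a) module \<Rightarrow> bool" where
  "left_module R M \<longleftrightarrow> ring R \<and> abelian_group M \<and>
    (\<forall>a\<in>carrier R. \<forall>x\<in>carrier M. a \<odot>\<^bsub>M\<^esub> x \<in> carrier M) \<and>
    (\<forall>a\<in>carrier R. \<forall>b\<in>carrier R. \<forall>x\<in>carrier M.
        (a \<oplus>\<^bsub>R\<^esub> b) \<odot>\<^bsub>M\<^esub> x = a \<odot>\<^bsub>M\<^esub> x \<oplus>\<^bsub>M\<^esub> b \<odot>\<^bsub>M\<^esub> x) \<and>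
    (\<forall>a\<in>carrier R. \<forall>x\<in>carrier M. \<forall>y\<in>carrier M.
        a \<odot>\<^bsub>M\<^esub> (x \<oplus>\<^bsub>M\<^esub> y) = a \<odot>\<^bsub>M\<^esub> x \<oplus>\<^bsub>M\<^esub> a \<odot>\<^bsub>M\<^esub> y) \<and>
    (\<forall>a\<in>carrier R. \<forall>b\<in>carrier R. \<forall>x\<in>carrier M.
        (a \<otimes>\<^bsub>R\<^esub> b) \<odot>\<^bsub>M\<^esub> x = a \<odot>\<^bsub>M\<^esub> (b \<odot>\<^bsub>M\<^esub> x)) \<and>
    (\<forall>x\<in>carrier M. \<one>\<^bsub>R\<^esub> \<odot>\<^bsub>M\<^esub> x = x)"

definition mod_hom :: "'r ring \<Rightarrow> ('r, 'a) module \<Rightarrow> ('r, 'b) module \<Rightarrow> ('a \<Rightarrow> 'b) set" where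
  "mod_hom R M N = {f. f \<in> carrier M \<rightarrow> carrier N \<and>
     (\<forall>x\<in>carrier M. \<forall>y\<in>carrier M. f (x \<oplus>\<^bsub>M\<^esub> y) = f x \<oplus>\<^bsub>N\<^esub> f y) \<and>
     (\<forall>a\<in>carrier R. \<forall>x\<in>carrier M. f (a \<odot>\<^bsub>M\<^esub> x) = a \<odot>\<^bsub>N\<^esub> f x)}"

definition submod_sum :: "'r ring \<Rightarrow> ('r, 'a) module \<Rightarrow> 'a set set \<Rightarrow> 'a set" where
  "submod_sum R M S = \<Inter>{K. submodule K R M \<and> \<Union>S \<subseteq> K}"

definition generated_by :: "'r ring \<Rightarrow> ('r, 'a) module \<Rightarrow> ('r, 'b) module \<Rightarrow> bool" where
  "generated_by R M X \<longleftrightarrow> left_module R X \<and>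
     carrier X = submod_sum R X {f ` carrier M | f. f \<in> mod_hom R M X}"

definition in_sigma :: "'r ring \<Rightarrow> ('r, 'a) module \<Rightarrow> ('r, 'b) module \<Rightarrow> bool" where
  "in_sigma R M N \<longleftrightarrow> left_module R N \<and>
     (\<exists>X :: ('r, 'b) module. generated_by R M X \<and>
        (\<exists>g \<in> mod_hom R N X. inj_on g (carrier N)))"

text \<open>M is projective in sigma[M], testing against modules of sigma[M] whose carriers live in
  the type 'b.\<close>

definition projective_in_sigma :: "'r ring \<Rightarrow> ('r, 'a) module \<Rightarrow> 'b itself \<Rightarrow> bool" where
  "projective_in_sigma R M (T :: 'b itself) \<longleftrightarrow>
     (\<forall>(A :: ('r, 'b) module) (B :: ('r, 'b) module). in_sigma R M A \<longrightarrow> in_sigma R M B \<longrightarrow>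
        (\<forall>g \<in> mod_hom R A B. g ` carrier A = carrier B \<longrightarrow>
          (\<forall>f \<in> mod_hom R M B. \<exists>h \<in> mod_hom R M A. \<forall>x\<in>carrier M. g (h x) = f x)))"

definition fully_invariant :: "'r ring \<Rightarrow> ('r, 'a) module \<Rightarrow> 'a set \<Rightarrow> bool" where
  "fully_invariant R M N \<longleftrightarrow> submodule N R M \<and> (\<forall>f \<in> mod_hom R M M. f ` N \<subseteq> N)"

definition Lambda_fi :: "'r ring \<Rightarrow> ('r, 'a) module \<Rightarrow> 'a set set" where
  "Lambda_fi R M = {N. fully_invariant R M N}"

text \<open>Hom_R(M, L) for a submodule L of M: endomorphisms of M with image inside L.\<close>

definition hom_into :: "'r ring \<Rightarrow> ('r, 'a) module \<Rightarrow> 'a set \<Rightarrow> ('a \<Rightarrow> 'a) set" where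
  "hom_into R M L = {f \<in> mod_hom R M M. f ` carrier M \<subseteq> L}"

text \<open>N_M L = sum of f(N), f in Hom_R(M, L).\<close>

definition prodM :: "'r ring \<Rightarrow> ('r, 'a) module \<Rightarrow> 'a set \<Rightarrow> 'a set \<Rightarrow> 'a set" where
  "prodM R M N L = submod_sum R M {f ` N | f. f \<in> hom_into R M L}"

definition semiprime_in :: "'r ring \<Rightarrow> ('r, 'a) module \<Rightarrow> 'a set \<Rightarrow> bool" where
  "semiprime_in R M N \<longleftrightarrow> N \<in> Lambda_fi R M \<and> N \<noteq> carrier M \<and>
     (\<forall>K \<in> Lambda_fi R M. prodM R M K K \<subseteq> N \<longrightarrow> K \<subseteq> N)"

definition SP :: "'r ring \<Rightarrow> ('r, 'a) module \<Rightarrow> 'a set set" where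
  "SP R M = {N. semiprime_in R M N} \<union> {carrier M}"

definition LgSpec :: "'r ring \<Rightarrow> ('r, 'a) module \<Rightarrow> 'a set set" where
  "LgSpec R M = {P. submodule P R M \<and> P \<noteq> carrier M \<and>
     (\<forall>N \<in> Lambda_fi R M. \<forall>L \<in> Lambda_fi R M. prodM R M N L \<subseteq> P \<longrightarrow> N \<subseteq> P \<or> L \<subseteq> P)}"

definition Uopen :: "'r ring \<Rightarrow> ('r, 'a) module \<Rightarrow> 'a set \<Rightarrow> 'a set set" where
  "Uopen R M N = {P \<in> LgSpec R M. \<not> N \<subseteq> P}"

definition LgOpens :: "'r ring \<Rightarrow> ('r, 'a) module \<Rightarrow> 'a set set set" where
  "LgOpens R M = {Uopen R M N | N. N \<in> Lambda_fi R M}"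

definition incl_order :: "'x set set \<Rightarrow> 'x set gorder" where
  "incl_order S = \<lparr>carrier = S, eq = (=), le = (\<subseteq>)\<rparr>"

definition frame :: "'x gorder \<Rightarrow> bool" where
  "frame L \<longleftrightarrow> complete_lattice L \<and>
     (\<forall>x\<in>carrier L. \<forall>A. A \<subseteq> carrier L \<longrightarrow>
        x \<sqinter>\<^bsub>L\<^esub> (\<Squnion>\<^bsub>L\<^esub> A) = \<Squnion>\<^bsub>L\<^esub> ((\<lambda>a. x \<sqinter>\<^bsub>L\<^esub> a) ` A))"

definition frame_iso :: "'x gorder \<Rightarrow> 'y gorder \<Rightarrow> ('x \<Rightarrow> 'y) \<Rightarrow> bool" where
  "frame_iso L K f \<longleftrightarrow> frame L \<and> frame K \<and> bij_betw f (carrier L) (carrier K) \<and>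
     sup_pres L K f \<and> meet_pres L K f \<and> f \<top>\<^bsub>L\<^esub> = \<top>\<^bsub>K\<^esub>"

end

theory Submission
  imports Defs "HOL-Algebra.AbelCoset"
begin

text \<open>The map \<open>N \<mapsto> \<U>(N)\<close> sends \<open>N\<^sub>M L\<close> to \<open>\<U>(N) \<inter> \<U>(L)\<close> and sums of fully invariant
  submodules to unions, so the sets \<open>\<U>(N)\<close> are the open sets of a topology and form a frame.
  Restricted to \<open>SP(M)\<close> it is an order isomorphism onto these opens, and a frame structure
  transports along an order isomorphism. The substance is that a semiprime \<open>S\<close> is the
  intersection of the primes containing it: for \<open>x \<notin> S\<close>, semiprimeness yields a sequence
  \<open>x = x\<^sub>0, x\<^sub>1, \<dots>\<close> outside \<open>S\<close>, each point in the square of the fully invariant hull of the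
  previous one, and a fully invariant submodule maximal among those containing \<open>S\<close> and missing
  the sequence is prime. For this last step projectivity gives \<open>(P + N)\<^sub>M(P + L) \<subseteq> P\<close>
  whenever \<open>N\<^sub>M L \<subseteq> P\<close>. Surjectivity onto the opens uses the intersection of the fully
  invariant primes above \<open>N\<close>, which is semiprime.\<close>

section \<open>Families of sets ordered by inclusion\<close>

lemma incl_order_partial_order: "partial_order (incl_order S)"
  unfolding incl_order_def by unfold_locales auto

lemma carrier_incl_order [simp]: "carrier (incl_order S) = S"
  by (simp add: incl_order_def)

lemma Upper_incl_order: "A \<subseteq> S \<Longrightarrow> Upper (incl_order S) A = {u \<in> S. \<forall>a\<in>A. a \<subseteq> u}"
  unfolding Upper_def incl_order_def by auto

lemma Lower_incl_order: "A \<subseteq> S \<Longrightarrow> Lower (incl_order S) A = {u \<in> S. \<forall>a\<in>A. u \<subseteq> a}"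
  unfolding Lower_def incl_order_def by auto

lemma least_Upper_incl_order_iff:
  "A \<subseteq> S \<Longrightarrow> least (incl_order S) s (Upper (incl_order S) A) \<longleftrightarrow>
     s \<in> S \<and> (\<forall>a\<in>A. a \<subseteq> s) \<and> (\<forall>u\<in>S. (\<forall>a\<in>A. a \<subseteq> u) \<longrightarrow> s \<subseteq> u)"
  unfolding least_def by (simp add: Upper_incl_order) (simp add: incl_order_def Ball_def imp_conjL)

lemma greatest_Lower_incl_order_iff:
  "A \<subseteq> S \<Longrightarrow> greatest (incl_order S) s (Lower (incl_order S) A) \<longleftrightarrow>
     s \<in> S \<and> (\<forall>a\<in>A. s \<subseteq> a) \<and> (\<forall>u\<in>S. (\<forall>a\<in>A. u \<subseteq> a) \<longrightarrow> u \<subseteq> s)"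
  unfolding greatest_def by (simp add: Lower_incl_order) (simp add: incl_order_def Ball_def imp_conjL)

lemma sup_incl_order_eqI:
  assumes "A \<subseteq> S" "s \<in> S" "\<And>a. a \<in> A \<Longrightarrow> a \<subseteq> s"
    and "\<And>u. u \<in> S \<Longrightarrow> \<forall>a\<in>A. a \<subseteq> u \<Longrightarrow> s \<subseteq> u"
  shows "\<Squnion>\<^bsub>incl_order S\<^esub> A = s"
proof -
  interpret partial_order "incl_order S" by (rule incl_order_partial_order)
  have lub: "least (incl_order S) s (Upper (incl_order S) A)"
    using assms by (simp add: least_Upper_incl_order_iff)
  show ?thesis unfolding sup_def by (rule some_equality) (fact lub, erule least_unique[OF _ lub])
qed

lemma inf_incl_order_eqI:
  assumes "A \<subseteq> S" "s \<in> S" "\<And>a. a \<in> A \<Longrightarrow> s \<subseteq> a"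
    and "\<And>u. u \<in> S \<Longrightarrow> \<forall>a\<in>A. u \<subseteq> a \<Longrightarrow> u \<subseteq> s"
  shows "\<Sqinter>\<^bsub>incl_order S\<^esub> A = s"
proof -
  interpret partial_order "incl_order S" by (rule incl_order_partial_order)
  have glb: "greatest (incl_order S) s (Lower (incl_order S) A)"
    using assms by (simp add: greatest_Lower_incl_order_iff)
  show ?thesis unfolding inf_def by (rule some_equality) (fact glb, erule greatest_unique[OF _ glb])
qed

lemma sup_incl_order_eq_Union: "A \<subseteq> S \<Longrightarrow> \<Union>A \<in> S \<Longrightarrow> \<Squnion>\<^bsub>incl_order S\<^esub> A = \<Union>A"
  by (rule sup_incl_order_eqI) auto

lemma meet_incl_order_eq_Int:
  "x \<in> S \<Longrightarrow> y \<in> S \<Longrightarrow> x \<inter> y \<in> S \<Longrightarrow> x \<sqinter>\<^bsub>incl_order S\<^esub> y = x \<inter> y"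
  unfolding meet_def by (rule inf_incl_order_eqI) auto

theorem frame_incl_order_if_istopology:
  assumes top: "istopology (\<lambda>U. U \<in> S)"
  shows "frame (incl_order S)"
proof -
  have Int: "x \<in> S \<Longrightarrow> y \<in> S \<Longrightarrow> x \<inter> y \<in> S" for x y
    using top unfolding istopology_def by blast
  have Union: "A \<subseteq> S \<Longrightarrow> \<Union>A \<in> S" for A
    using top unfolding istopology_def by blast
  have "complete_lattice (incl_order S)"
  proof (rule partial_order.complete_latticeI[OF incl_order_partial_order])
    fix A assume "A \<subseteq> carrier (incl_order S)"
    then have A: "A \<subseteq> S" by simp
    show "\<exists>s. least (incl_order S) s (Upper (incl_order S) A)"
      using Union[OF A] unfolding least_Upper_incl_order_iff[OF A] by blast
    have "\<Union>{U \<in> S. \<forall>a\<in>A. U \<subseteq> a} \<in> S" by (rule Union) blast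
    then show "\<exists>i. greatest (incl_order S) i (Lower (incl_order S) A)"
      unfolding greatest_Lower_incl_order_iff[OF A] by blast
  qed
  moreover have "x \<sqinter>\<^bsub>incl_order S\<^esub> \<Squnion>\<^bsub>incl_order S\<^esub> A =
      \<Squnion>\<^bsub>incl_order S\<^esub> ((\<lambda>a. x \<sqinter>\<^bsub>incl_order S\<^esub> a) ` A)" if x: "x \<in> S" and A: "A \<subseteq> S" for x A
  proof -
    have meets: "(\<lambda>a. x \<sqinter>\<^bsub>incl_order S\<^esub> a) ` A = (\<lambda>a. x \<inter> a) ` A"
      using x A Int by (intro image_cong) (auto simp: meet_incl_order_eq_Int)
    have img: "(\<lambda>a. x \<inter> a) ` A \<subseteq> S" using x A Int by blast
    have "\<Squnion>\<^bsub>incl_order S\<^esub> ((\<lambda>a. x \<inter> a) ` A) = x \<inter> \<Union>A"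
      using sup_incl_order_eq_Union[OF img Union[OF img]] by blast
    moreover have "\<Squnion>\<^bsub>incl_order S\<^esub> A = \<Union>A"
      using A Union[OF A] by (rule sup_incl_order_eq_Union)
    ultimately show ?thesis
      using x A Union Int by (simp add: meets meet_incl_order_eq_Int)
  qed
  ultimately show ?thesis unfolding frame_def by simp
qed

locale incl_order_iso =
  fixes f :: "'x set \<Rightarrow> 'y set" and S :: "'x set set" and T :: "'y set set"
  assumes bij: "bij_betw f S T"
    and subset_iff: "a \<in> S \<Longrightarrow> b \<in> S \<Longrightarrow> f a \<subseteq> f b \<longleftrightarrow> a \<subseteq> b"
begin

lemma image_eq: "f ` S = T" and inj: "inj_on f S"
  using bij by (simp_all add: bij_betw_def)

lemma least_Upper_image_iff:
  assumes A: "A \<subseteq> S" and s: "s \<in> S"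
  shows "least (incl_order T) (f s) (Upper (incl_order T) (f ` A)) \<longleftrightarrow>
         least (incl_order S) s (Upper (incl_order S) A)"
proof -
  have fA: "f ` A \<subseteq> T" and fs: "f s \<in> T" using image_eq A s by blast+
  have "(\<forall>v\<in>T. (\<forall>b\<in>f ` A. b \<subseteq> v) \<longrightarrow> f s \<subseteq> v) \<longleftrightarrow> (\<forall>u\<in>S. (\<forall>a\<in>A. a \<subseteq> u) \<longrightarrow> s \<subseteq> u)"
    unfolding image_eq[symmetric] using subset_iff A s by (auto simp: Set.subset_iff[of A S])
  moreover have "(\<forall>b\<in>f ` A. b \<subseteq> f s) \<longleftrightarrow> (\<forall>a\<in>A. a \<subseteq> s)" using subset_iff A s by blast
  ultimately show ?thesis
    using fs s by (simp add: least_Upper_incl_order_iff[OF A] least_Upper_incl_order_iff[OF fA])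
qed

lemma greatest_Lower_image_iff:
  assumes A: "A \<subseteq> S" and s: "s \<in> S"
  shows "greatest (incl_order T) (f s) (Lower (incl_order T) (f ` A)) \<longleftrightarrow>
         greatest (incl_order S) s (Lower (incl_order S) A)"
proof -
  have fA: "f ` A \<subseteq> T" and fs: "f s \<in> T" using image_eq A s by blast+
  have "(\<forall>v\<in>T. (\<forall>b\<in>f ` A. v \<subseteq> b) \<longrightarrow> v \<subseteq> f s) \<longleftrightarrow> (\<forall>u\<in>S. (\<forall>a\<in>A. u \<subseteq> a) \<longrightarrow> u \<subseteq> s)"
    unfolding image_eq[symmetric] using subset_iff A s by (auto simp: Set.subset_iff[of A S])
  moreover have "(\<forall>b\<in>f ` A. f s \<subseteq> b) \<longleftrightarrow> (\<forall>a\<in>A. s \<subseteq> a)" using subset_iff A s by blast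
  ultimately show ?thesis
    using fs s by (simp add: greatest_Lower_incl_order_iff[OF A] greatest_Lower_incl_order_iff[OF fA])
qed

context
  assumes T: "complete_lattice (incl_order T)"
begin

interpretation T: complete_lattice "incl_order T" by (rule T)

lemma complete_lattice: "complete_lattice (incl_order S)"
proof (rule partial_order.complete_latticeI[OF incl_order_partial_order])
  fix A assume "A \<subseteq> carrier (incl_order S)"
  then have A: "A \<subseteq> S" and fA: "f ` A \<subseteq> carrier (incl_order T)" using image_eq by auto
  obtain s where s: "s \<in> S" "f s = \<Squnion>\<^bsub>incl_order T\<^esub> (f ` A)"
    using T.sup_closed[OF fA] image_eq by (metis carrier_incl_order imageE)
  obtain i where i: "i \<in> S" "f i = \<Sqinter>\<^bsub>incl_order T\<^esub> (f ` A)"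
    using T.inf_closed[OF fA] image_eq by (metis carrier_incl_order imageE)
  show "\<exists>s. least (incl_order S) s (Upper (incl_order S) A)"
    using T.sup_lub[OF fA] least_Upper_image_iff[OF A s(1)] s(2) by auto
  show "\<exists>i. greatest (incl_order S) i (Lower (incl_order S) A)"
    using T.inf_glb[OF fA] greatest_Lower_image_iff[OF A i(1)] i(2) by auto
qed

interpretation S: complete_lattice "incl_order S" by (rule complete_lattice)

lemma sup_closed: "B \<subseteq> S \<Longrightarrow> \<Squnion>\<^bsub>incl_order S\<^esub> B \<in> S"
  using S.sup_closed by simp

lemma meet_closed: "x \<in> S \<Longrightarrow> y \<in> S \<Longrightarrow> x \<sqinter>\<^bsub>incl_order S\<^esub> y \<in> S"
  using S.meet_closed by simp

lemma sup_preserving: "A \<subseteq> S \<Longrightarrow> f (\<Squnion>\<^bsub>incl_order S\<^esub> A) = \<Squnion>\<^bsub>incl_order T\<^esub> (f ` A)"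
  using S.sup_lub[of A] sup_closed[of A] least_Upper_image_iff image_eq
  by (intro T.least_unique[OF _ T.sup_lub]) auto

lemma inf_preserving: "A \<subseteq> S \<Longrightarrow> f (\<Sqinter>\<^bsub>incl_order S\<^esub> A) = \<Sqinter>\<^bsub>incl_order T\<^esub> (f ` A)"
  using S.inf_glb[of A] S.inf_closed[of A] greatest_Lower_image_iff image_eq
  by (intro T.greatest_unique[OF _ T.inf_glb]) auto

lemma meet_preserving: "x \<in> S \<Longrightarrow> y \<in> S \<Longrightarrow> f (x \<sqinter>\<^bsub>incl_order S\<^esub> y) = f x \<sqinter>\<^bsub>incl_order T\<^esub> f y"
  by (simp add: meet_def inf_preserving)

lemma top_preserving: "f \<top>\<^bsub>incl_order S\<^esub> = \<top>\<^bsub>incl_order T\<^esub>"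
  using S.weak_sup_carrier T.weak_sup_carrier sup_preserving[of S] image_eq
  by (simp add: S.eq_is_equal T.eq_is_equal)

end

theorem frame_iso_if_frame:
  assumes T: "frame (incl_order T)"
  shows "frame_iso (incl_order S) (incl_order T) f"
proof -
  let ?S = "incl_order S" and ?T = "incl_order T"
  have TL: "complete_lattice ?T" using T by (simp add: frame_def)
  note closed = sup_closed[OF TL] meet_closed[OF TL]
  note preserving = sup_preserving[OF TL] meet_preserving[OF TL]
  have distrib: "y \<sqinter>\<^bsub>?T\<^esub> \<Squnion>\<^bsub>?T\<^esub> B = \<Squnion>\<^bsub>?T\<^esub> ((\<lambda>b. y \<sqinter>\<^bsub>?T\<^esub> b) ` B)"
    if "y \<in> T" "B \<subseteq> T" for y B
    using T that unfolding frame_def by simp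
  have "x \<sqinter>\<^bsub>?S\<^esub> \<Squnion>\<^bsub>?S\<^esub> A = \<Squnion>\<^bsub>?S\<^esub> ((\<lambda>a. x \<sqinter>\<^bsub>?S\<^esub> a) ` A)"
    if x: "x \<in> S" and A: "A \<subseteq> S" for x A
  proof -
    have xA: "(\<lambda>a. x \<sqinter>\<^bsub>?S\<^esub> a) ` A \<subseteq> S" using x A closed by auto
    have "f (x \<sqinter>\<^bsub>?S\<^esub> \<Squnion>\<^bsub>?S\<^esub> A) = f x \<sqinter>\<^bsub>?T\<^esub> \<Squnion>\<^bsub>?T\<^esub> (f ` A)"
      using x A closed by (simp add: preserving)
    also have "\<dots> = \<Squnion>\<^bsub>?T\<^esub> ((\<lambda>b. f x \<sqinter>\<^bsub>?T\<^esub> b) ` f ` A)"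
      using x A image_eq by (intro distrib) auto
    also have "(\<lambda>b. f x \<sqinter>\<^bsub>?T\<^esub> b) ` f ` A = f ` (\<lambda>a. x \<sqinter>\<^bsub>?S\<^esub> a) ` A"
      using x A by (auto simp: preserving image_image intro!: image_cong)
    also have "\<Squnion>\<^bsub>?T\<^esub> \<dots> = f (\<Squnion>\<^bsub>?S\<^esub> ((\<lambda>a. x \<sqinter>\<^bsub>?S\<^esub> a) ` A))"
      using xA by (simp add: preserving)
    finally show ?thesis
      by (rule inj_onD[OF inj]) (use x A xA closed in simp_all)
  qed
  then have "frame ?S" using complete_lattice[OF TL] by (simp add: frame_def)
  then show ?thesis
    using T bij complete_lattice[OF TL] TL top_preserving[OF TL]
    unfolding frame_iso_def sup_pres_def meet_pres_def by (auto simp: preserving)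
qed

end

lemma submodule_closedI:
  fixes M :: "('r, 'a) module"
  assumes "H \<subseteq> carrier M" "\<zero>\<^bsub>M\<^esub> \<in> H"
    "\<And>x y. x \<in> H \<Longrightarrow> y \<in> H \<Longrightarrow> x \<oplus>\<^bsub>M\<^esub> y \<in> H"
    "\<And>x. x \<in> H \<Longrightarrow> \<ominus>\<^bsub>M\<^esub> x \<in> H"
    "\<And>a x. a \<in> carrier R \<Longrightarrow> x \<in> H \<Longrightarrow> a \<odot>\<^bsub>M\<^esub> x \<in> H"
  shows "submodule H R M"
  using assms unfolding submodule_def subgroup_def submodule_axioms_def a_inv_def
  by auto

lemma submodule_closedD:
  fixes M :: "('r, 'a) module"
  assumes "submodule H R M"
  shows "H \<subseteq> carrier M" "\<zero>\<^bsub>M\<^esub> \<in> H"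
    "\<And>x y. x \<in> H \<Longrightarrow> y \<in> H \<Longrightarrow> x \<oplus>\<^bsub>M\<^esub> y \<in> H"
    "\<And>x. x \<in> H \<Longrightarrow> \<ominus>\<^bsub>M\<^esub> x \<in> H"
    "\<And>a x. a \<in> carrier R \<Longrightarrow> x \<in> H \<Longrightarrow> a \<odot>\<^bsub>M\<^esub> x \<in> H"
  using assms unfolding submodule_def subgroup_def submodule_axioms_def a_inv_def
  by auto

lemma submod_sum_least: "submodule K R M \<Longrightarrow> \<Union>S \<subseteq> K \<Longrightarrow> submod_sum R M S \<subseteq> K"
  unfolding submod_sum_def by auto

lemma mod_hom_comp: "f \<in> mod_hom R X Y \<Longrightarrow> g \<in> mod_hom R Y Z \<Longrightarrow> g \<circ> f \<in> mod_hom R X Z"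
  unfolding mod_hom_def by (auto simp: Pi_def)

lemma mem_set_add_iff: "x \<in> P <+>\<^bsub>M\<^esub> L \<longleftrightarrow> (\<exists>p\<in>P. \<exists>l\<in>L. x = p \<oplus>\<^bsub>M\<^esub> l)"
  unfolding set_add_def set_mult_def by auto

locale lmodule =
  fixes R :: "'r ring" and M :: "('r, 'a) module"
  assumes left_module: "left_module R M"
begin

sublocale M: abelian_group M
  using left_module by (simp add: left_module_def)

lemma ring_R: "ring R"
  using left_module by (simp add: left_module_def)

lemma smult_closed: "a \<in> carrier R \<Longrightarrow> x \<in> carrier M \<Longrightarrow> a \<odot>\<^bsub>M\<^esub> x \<in> carrier M"
  using left_module by (simp add: left_module_def)

lemma smult_r_distr: "a \<in> carrier R \<Longrightarrow> x \<in> carrier M \<Longrightarrow> y \<in> carrier M \<Longrightarrow>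
    a \<odot>\<^bsub>M\<^esub> (x \<oplus>\<^bsub>M\<^esub> y) = a \<odot>\<^bsub>M\<^esub> x \<oplus>\<^bsub>M\<^esub> a \<odot>\<^bsub>M\<^esub> y"
  using left_module by (simp add: left_module_def)

lemma smult_l_distr: "a \<in> carrier R \<Longrightarrow> b \<in> carrier R \<Longrightarrow> x \<in> carrier M \<Longrightarrow>
    (a \<oplus>\<^bsub>R\<^esub> b) \<odot>\<^bsub>M\<^esub> x = a \<odot>\<^bsub>M\<^esub> x \<oplus>\<^bsub>M\<^esub> b \<odot>\<^bsub>M\<^esub> x"
  using left_module by (simp add: left_module_def)

lemma smult_assoc: "a \<in> carrier R \<Longrightarrow> b \<in> carrier R \<Longrightarrow> x \<in> carrier M \<Longrightarrow>
    (a \<otimes>\<^bsub>R\<^esub> b) \<odot>\<^bsub>M\<^esub> x = a \<odot>\<^bsub>M\<^esub> (b \<odot>\<^bsub>M\<^esub> x)"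
  using left_module by (simp add: left_module_def)

lemma smult_one: "x \<in> carrier M \<Longrightarrow> \<one>\<^bsub>R\<^esub> \<odot>\<^bsub>M\<^esub> x = x"
  using left_module by (simp add: left_module_def)

lemma smult_zero: "a \<in> carrier R \<Longrightarrow> a \<odot>\<^bsub>M\<^esub> \<zero>\<^bsub>M\<^esub> = \<zero>\<^bsub>M\<^esub>"
  using smult_r_distr[of a "\<zero>\<^bsub>M\<^esub>" "\<zero>\<^bsub>M\<^esub>"] smult_closed[of a "\<zero>\<^bsub>M\<^esub>"]
  by (simp add: M.add.l_cancel_one)

lemma carrier_submodule: "submodule (carrier M) R M"
  by (rule submodule_closedI) (auto intro: smult_closed)

lemma Inter_submodule:
  assumes "\<F> \<noteq> {}" "\<And>K. K \<in> \<F> \<Longrightarrow> submodule K R M"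
  shows "submodule (\<Inter>\<F>) R M"
proof -
  note sub = submodule_closedD[OF assms(2)]
  show ?thesis
  proof (rule submodule_closedI)
    show "\<Inter>\<F> \<subseteq> carrier M" using assms(1) sub(1) by blast
    show "\<zero>\<^bsub>M\<^esub> \<in> \<Inter>\<F>" using sub(2) by blast
    show "x \<oplus>\<^bsub>M\<^esub> y \<in> \<Inter>\<F>" if "x \<in> \<Inter>\<F>" "y \<in> \<Inter>\<F>" for x y
      using that sub(3) by blast
    show "\<ominus>\<^bsub>M\<^esub> x \<in> \<Inter>\<F>" if "x \<in> \<Inter>\<F>" for x using that sub(4) by blast
    show "a \<odot>\<^bsub>M\<^esub> x \<in> \<Inter>\<F>" if "a \<in> carrier R" "x \<in> \<Inter>\<F>" for a x
      using that sub(5) by blast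
  qed
qed

lemma submod_sum_submodule: "\<Union>S \<subseteq> carrier M \<Longrightarrow> submodule (submod_sum R M S) R M"
  unfolding submod_sum_def by (rule Inter_submodule) (use carrier_submodule in auto)

lemma submod_sum_upper: "\<Union>S \<subseteq> carrier M \<Longrightarrow> X \<in> S \<Longrightarrow> X \<subseteq> submod_sum R M S"
  unfolding submod_sum_def using carrier_submodule by auto

lemma set_add_memI: "p \<in> P \<Longrightarrow> l \<in> L \<Longrightarrow> p \<oplus>\<^bsub>M\<^esub> l \<in> P <+>\<^bsub>M\<^esub> L"
  by (auto simp: mem_set_add_iff)

lemma set_add_submodule:
  assumes P: "submodule P R M" and L: "submodule L R M"
  shows "submodule (P <+>\<^bsub>M\<^esub> L) R M"
proof (rule submodule_closedI)
  note p = submodule_closedD[OF P] and l = submodule_closedD[OF L]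
  show "P <+>\<^bsub>M\<^esub> L \<subseteq> carrier M" using p(1) l(1) by (auto simp: mem_set_add_iff subset_iff)
  show "\<zero>\<^bsub>M\<^esub> \<in> P <+>\<^bsub>M\<^esub> L" using set_add_memI[OF p(2) l(2)] by simp
  fix x y assume "x \<in> P <+>\<^bsub>M\<^esub> L"
  then obtain a b where ab: "a \<in> P" "b \<in> L" "x = a \<oplus>\<^bsub>M\<^esub> b" by (auto simp: mem_set_add_iff)
  then have abM: "a \<in> carrier M" "b \<in> carrier M" using p(1) l(1) by auto
  show "\<ominus>\<^bsub>M\<^esub> x \<in> P <+>\<^bsub>M\<^esub> L"
    using ab abM p(4) l(4) by (auto simp: M.minus_add intro: set_add_memI)
  show "r \<odot>\<^bsub>M\<^esub> x \<in> P <+>\<^bsub>M\<^esub> L" if "r \<in> carrier R" for r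
    using that ab abM p(5) l(5) by (auto simp: smult_r_distr intro: set_add_memI)
  assume "y \<in> P <+>\<^bsub>M\<^esub> L"
  then obtain c d where cd: "c \<in> P" "d \<in> L" "y = c \<oplus>\<^bsub>M\<^esub> d" by (auto simp: mem_set_add_iff)
  then have "c \<in> carrier M" "d \<in> carrier M" using p(1) l(1) by auto
  then have "x \<oplus>\<^bsub>M\<^esub> y = (a \<oplus>\<^bsub>M\<^esub> c) \<oplus>\<^bsub>M\<^esub> (b \<oplus>\<^bsub>M\<^esub> d)"
    using ab abM cd by (simp add: M.a_ac)
  then show "x \<oplus>\<^bsub>M\<^esub> y \<in> P <+>\<^bsub>M\<^esub> L" using ab cd p(3) l(3) by (auto intro: set_add_memI)
qed

lemma set_add_upper:
  assumes "submodule P R M" "submodule L R M"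
  shows "P \<subseteq> P <+>\<^bsub>M\<^esub> L" and "L \<subseteq> P <+>\<^bsub>M\<^esub> L"
proof -
  note p = submodule_closedD[OF assms(1)] and l = submodule_closedD[OF assms(2)]
  show "P \<subseteq> P <+>\<^bsub>M\<^esub> L"
    using p(1) set_add_memI[OF _ l(2), of _ P] by (force simp: subset_iff)
  show "L \<subseteq> P <+>\<^bsub>M\<^esub> L"
    using l(1) set_add_memI[OF p(2), of _ L] by (force simp: subset_iff)
qed

lemma mod_hom_closed: "f \<in> mod_hom R M M \<Longrightarrow> x \<in> carrier M \<Longrightarrow> f x \<in> carrier M"
  unfolding mod_hom_def by auto

lemma mod_hom_add: "f \<in> mod_hom R M M \<Longrightarrow> x \<in> carrier M \<Longrightarrow> y \<in> carrier M \<Longrightarrow>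
    f (x \<oplus>\<^bsub>M\<^esub> y) = f x \<oplus>\<^bsub>M\<^esub> f y"
  unfolding mod_hom_def by auto

lemma mod_hom_smult: "f \<in> mod_hom R M M \<Longrightarrow> a \<in> carrier R \<Longrightarrow> x \<in> carrier M \<Longrightarrow>
    f (a \<odot>\<^bsub>M\<^esub> x) = a \<odot>\<^bsub>M\<^esub> f x"
  unfolding mod_hom_def by auto

lemma mod_hom_zero: "f \<in> mod_hom R M M \<Longrightarrow> f \<zero>\<^bsub>M\<^esub> = \<zero>\<^bsub>M\<^esub>"
  using mod_hom_add[of f "\<zero>\<^bsub>M\<^esub>" "\<zero>\<^bsub>M\<^esub>"] mod_hom_closed[of f "\<zero>\<^bsub>M\<^esub>"]
  by (simp add: M.add.l_cancel_one)

lemma mod_hom_neg: "f \<in> mod_hom R M M \<Longrightarrow> x \<in> carrier M \<Longrightarrow> f (\<ominus>\<^bsub>M\<^esub> x) = \<ominus>\<^bsub>M\<^esub> f x"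
  using mod_hom_add[of f "\<ominus>\<^bsub>M\<^esub> x" x] mod_hom_zero[of f] mod_hom_closed[of f]
  by (metis M.a_inv_closed M.l_neg M.minus_equality)

lemma preimage_submodule:
  assumes f: "f \<in> mod_hom R M M" and T: "submodule T R M"
  shows "submodule {y \<in> carrier M. f y \<in> T} R M"
  using submodule_closedD[OF T] mod_hom_zero[OF f] mod_hom_add[OF f] mod_hom_neg[OF f]
    mod_hom_smult[OF f] smult_closed
  by (intro submodule_closedI) auto

section \<open>Fully invariant submodules and the product \<open>N\<^sub>M L\<close>\<close>

lemma fully_invariantI:
  "submodule N R M \<Longrightarrow> (\<And>f x. f \<in> mod_hom R M M \<Longrightarrow> x \<in> N \<Longrightarrow> f x \<in> N) \<Longrightarrow> fully_invariant R M N"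
  unfolding fully_invariant_def by blast

lemma fully_invariantD:
  "fully_invariant R M N \<Longrightarrow> submodule N R M"
  "fully_invariant R M N \<Longrightarrow> f \<in> mod_hom R M M \<Longrightarrow> x \<in> N \<Longrightarrow> f x \<in> N"
  "fully_invariant R M N \<Longrightarrow> N \<subseteq> carrier M"
  unfolding fully_invariant_def using submodule_closedD(1) by blast+

lemma fully_invariant_carrier: "fully_invariant R M (carrier M)"
  by (rule fully_invariantI[OF carrier_submodule]) (rule mod_hom_closed)

lemma fully_invariant_Inter:
  "\<F> \<noteq> {} \<Longrightarrow> (\<And>K. K \<in> \<F> \<Longrightarrow> fully_invariant R M K) \<Longrightarrow> fully_invariant R M (\<Inter>\<F>)"
  by (intro fully_invariantI Inter_submodule) (auto dest: fully_invariantD)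

lemma fully_invariant_submod_sum:
  assumes "\<And>K. K \<in> S \<Longrightarrow> fully_invariant R M K"
  shows "fully_invariant R M (submod_sum R M S)"
proof -
  have S: "\<Union>S \<subseteq> carrier M" using assms fully_invariantD(3) by blast
  note T = submod_sum_submodule[OF S]
  show ?thesis
  proof (rule fully_invariantI[OF T])
    fix f x assume f: "f \<in> mod_hom R M M" and x: "x \<in> submod_sum R M S"
    have "\<Union>S \<subseteq> {y \<in> carrier M. f y \<in> submod_sum R M S}"
      using S submod_sum_upper[OF S] assms fully_invariantD(2)[OF _ f] by blast
    then have "submod_sum R M S \<subseteq> {y \<in> carrier M. f y \<in> submod_sum R M S}"
      by (rule submod_sum_least[OF preimage_submodule[OF f T]])
    then show "f x \<in> submod_sum R M S" using x by blast
  qed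
qed

lemma fully_invariant_Union_chain:
  assumes C: "C \<in> chains {K. fully_invariant R M K}" and ne: "C \<noteq> {}"
  shows "fully_invariant R M (\<Union>C)"
proof -
  have fi: "fully_invariant R M K" if "K \<in> C" for K using C that by (auto dest: chainsD2)
  have sub: "submodule K R M" if "K \<in> C" for K using fi[OF that] by (rule fully_invariantD(1))
  have "submodule (\<Union>C) R M"
  proof (rule submodule_closedI)
    show "\<Union>C \<subseteq> carrier M" using sub submodule_closedD(1) by blast
    show "\<zero>\<^bsub>M\<^esub> \<in> \<Union>C" using ne sub submodule_closedD(2) by blast
    fix x y assume "x \<in> \<Union>C"
    then obtain K where K: "K \<in> C" "x \<in> K" by blast
    show "\<ominus>\<^bsub>M\<^esub> x \<in> \<Union>C" using K submodule_closedD(4)[OF sub] by blast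
    show "a \<odot>\<^bsub>M\<^esub> x \<in> \<Union>C" if "a \<in> carrier R" for a
      using K that submodule_closedD(5)[OF sub] by blast
    assume "y \<in> \<Union>C"
    then obtain K' where K': "K' \<in> C" "y \<in> K'" by blast
    have "K \<subseteq> K' \<or> K' \<subseteq> K" using chainsD[OF C K(1) K'(1)] .
    then show "x \<oplus>\<^bsub>M\<^esub> y \<in> \<Union>C" using K K' submodule_closedD(3)[OF sub] by blast
  qed
  then show ?thesis by (rule fully_invariantI) (use fi fully_invariantD(2) in blast)
qed

lemma fully_invariant_set_add:
  assumes P: "fully_invariant R M P" and N: "fully_invariant R M N"
  shows "fully_invariant R M (P <+>\<^bsub>M\<^esub> N)"
proof (rule fully_invariantI[OF set_add_submodule[OF fully_invariantD(1)[OF P] fully_invariantD(1)[OF N]]])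
  fix f x assume f: "f \<in> mod_hom R M M" and "x \<in> P <+>\<^bsub>M\<^esub> N"
  then obtain a b where ab: "a \<in> P" "b \<in> N" "x = a \<oplus>\<^bsub>M\<^esub> b" by (auto simp: mem_set_add_iff)
  then have "f x = f a \<oplus>\<^bsub>M\<^esub> f b"
    using mod_hom_add[OF f] fully_invariantD(3)[OF P] fully_invariantD(3)[OF N] by blast
  then show "f x \<in> P <+>\<^bsub>M\<^esub> N"
    using fully_invariantD(2)[OF P f] fully_invariantD(2)[OF N f] ab by (auto simp: mem_set_add_iff)
qed

lemma hom_intoD:
  "f \<in> hom_into R M L \<Longrightarrow> f \<in> mod_hom R M M"
  "f \<in> hom_into R M L \<Longrightarrow> x \<in> carrier M \<Longrightarrow> f x \<in> L"
  unfolding hom_into_def by auto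

lemma prodM_generators_subset: "\<Union>{f ` N | f. f \<in> hom_into R M L} \<subseteq> carrier M" if "N \<subseteq> carrier M"
  using that hom_intoD mod_hom_closed by blast

lemma prodM_submodule: "N \<subseteq> carrier M \<Longrightarrow> submodule (prodM R M N L) R M"
  unfolding prodM_def by (rule submod_sum_submodule[OF prodM_generators_subset])

lemma image_subset_prodM: "N \<subseteq> carrier M \<Longrightarrow> f \<in> hom_into R M L \<Longrightarrow> f ` N \<subseteq> prodM R M N L"
  unfolding prodM_def by (rule submod_sum_upper[OF prodM_generators_subset]) auto

lemma prodM_least:
  "submodule K R M \<Longrightarrow> (\<And>f x. f \<in> hom_into R M L \<Longrightarrow> x \<in> N \<Longrightarrow> f x \<in> K) \<Longrightarrow> prodM R M N L \<subseteq> K"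
  unfolding prodM_def by (rule submod_sum_least) blast+

lemma prodM_subset_right:
  assumes "N \<subseteq> carrier M" "submodule L R M"
  shows "prodM R M N L \<subseteq> L"
proof (rule prodM_least[OF assms(2)])
  fix f x assume "f \<in> hom_into R M L" "x \<in> N"
  then show "f x \<in> L" using assms(1) hom_intoD(2) by blast
qed

lemma prodM_subset_left:
  assumes N: "fully_invariant R M N"
  shows "prodM R M N L \<subseteq> N"
proof (rule prodM_least[OF fully_invariantD(1)[OF N]])
  fix f x assume "f \<in> hom_into R M L" "x \<in> N"
  then show "f x \<in> N" using fully_invariantD(2)[OF N] hom_intoD(1) by blast
qed

lemma prodM_mono:
  assumes "N \<subseteq> N'" "L \<subseteq> L'" "N' \<subseteq> carrier M"
  shows "prodM R M N L \<subseteq> prodM R M N' L'"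
proof (rule prodM_least[OF prodM_submodule[OF assms(3)]])
  fix f x assume "f \<in> hom_into R M L" "x \<in> N"
  moreover from this have "f \<in> hom_into R M L'" using assms(2) unfolding hom_into_def by auto
  ultimately show "f x \<in> prodM R M N' L'" using image_subset_prodM[OF assms(3)] assms(1) by blast
qed

lemma fully_invariant_prodM:
  assumes N: "N \<subseteq> carrier M" and L: "fully_invariant R M L"
  shows "fully_invariant R M (prodM R M N L)"
proof (rule fully_invariantI[OF prodM_submodule[OF N]])
  fix g x assume g: "g \<in> mod_hom R M M" and x: "x \<in> prodM R M N L"
  have "prodM R M N L \<subseteq> {y \<in> carrier M. g y \<in> prodM R M N L}"
  proof (rule prodM_least[OF preimage_submodule[OF g prodM_submodule[OF N]]])
    fix f n assume f: "f \<in> hom_into R M L" and n: "n \<in> N"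
    have "g \<circ> f \<in> hom_into R M L"
      using f g mod_hom_comp fully_invariantD(2)[OF L g] unfolding hom_into_def by auto
    then have "g (f n) \<in> prodM R M N L" using image_subset_prodM[OF N] n by fastforce
    moreover have "f n \<in> carrier M" using n N mod_hom_closed[OF hom_intoD(1)[OF f]] by blast
    ultimately show "f n \<in> {y \<in> carrier M. g y \<in> prodM R M N L}" by simp
  qed
  then show "g x \<in> prodM R M N L" using x by blast
qed

end

text \<open>The only consequence of projectivity in \<open>\<sigma>[M]\<close> that the argument needs.\<close>

locale sum_lifting_module = lmodule +
  assumes lift_into_summand:
    "\<lbrakk>submodule P R M; submodule L R M; f \<in> mod_hom R M M; f ` carrier M \<subseteq> P <+>\<^bsub>M\<^esub> L\<rbrakk>
      \<Longrightarrow> \<exists>h\<in>hom_into R M L. \<forall>x\<in>carrier M. f x \<ominus>\<^bsub>M\<^esub> h x \<in> P"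
begin

lemma prodM_set_add_subset:
  assumes P: "fully_invariant R M P" and N: "submodule N R M" and L: "submodule L R M"
    and NL: "prodM R M N L \<subseteq> P"
  shows "prodM R M (P <+>\<^bsub>M\<^esub> N) (P <+>\<^bsub>M\<^esub> L) \<subseteq> P"
proof (rule prodM_least[OF fully_invariantD(1)[OF P]])
  fix f z assume f: "f \<in> hom_into R M (P <+>\<^bsub>M\<^esub> L)" and "z \<in> P <+>\<^bsub>M\<^esub> N"
  then obtain p n where pn: "p \<in> P" "n \<in> N" "z = p \<oplus>\<^bsub>M\<^esub> n" by (auto simp: mem_set_add_iff)
  have pM: "p \<in> carrier M" and nM: "n \<in> carrier M"
    using pn fully_invariantD(3)[OF P] submodule_closedD(1)[OF N] by auto
  have fM: "f \<in> mod_hom R M M" using f by (rule hom_intoD)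
  obtain h where h: "h \<in> hom_into R M L" and fh: "\<forall>x\<in>carrier M. f x \<ominus>\<^bsub>M\<^esub> h x \<in> P"
    using lift_into_summand[OF fully_invariantD(1)[OF P] L fM] hom_intoD(2)[OF f] by blast
  have "h n \<in> P" using image_subset_prodM[OF submodule_closedD(1)[OF N] h] pn(2) NL by blast
  moreover have "f n = (f n \<ominus>\<^bsub>M\<^esub> h n) \<oplus>\<^bsub>M\<^esub> h n"
    using mod_hom_closed[OF fM nM] mod_hom_closed[OF hom_intoD(1)[OF h] nM]
    by (simp add: a_minus_def M.a_assoc M.l_neg)
  ultimately have "f n \<in> P" using fh nM submodule_closedD(3)[OF fully_invariantD(1)[OF P]] by metis
  moreover have "f p \<in> P" using fully_invariantD(2)[OF P fM pn(1)] .
  ultimately show "f z \<in> P"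
    using pn(3) mod_hom_add[OF fM pM nM] submodule_closedD(3)[OF fully_invariantD(1)[OF P]] by simp
qed

end

section \<open>Prime submodules above a semiprime submodule\<close>

definition fi_hull :: "'r ring \<Rightarrow> ('r, 'a) module \<Rightarrow> 'a \<Rightarrow> 'a set" where
  "fi_hull R M x = \<Inter>{K. fully_invariant R M K \<and> x \<in> K}"

context lmodule
begin

lemma fully_invariant_fi_hull: "x \<in> carrier M \<Longrightarrow> fully_invariant R M (fi_hull R M x)"
  unfolding fi_hull_def by (rule fully_invariant_Inter) (use fully_invariant_carrier in auto)

lemma fi_hull_mem: "x \<in> fi_hull R M x"
  unfolding fi_hull_def by blast

lemma fi_hull_least: "fully_invariant R M K \<Longrightarrow> x \<in> K \<Longrightarrow> fi_hull R M x \<subseteq> K"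
  unfolding fi_hull_def by blast

lemma semiprime_sequence:
  assumes S: "semiprime_in R M S" and x: "x \<in> carrier M" "x \<notin> S"
  obtains xs where "xs 0 = x" "\<And>n. xs n \<in> carrier M" "\<And>n. xs n \<notin> S"
    "\<And>n. xs (Suc n) \<in> prodM R M (fi_hull R M (xs n)) (fi_hull R M (xs n))"
proof -
  let ?sq = "\<lambda>y. prodM R M (fi_hull R M y) (fi_hull R M y)"
  have step: "\<exists>z. z \<in> ?sq y \<and> z \<notin> S" if "y \<in> carrier M" "y \<notin> S" for y
  proof -
    have "\<not> fi_hull R M y \<subseteq> S" using fi_hull_mem that(2) by blast
    then show ?thesis
      using S fully_invariant_fi_hull[OF that(1)] unfolding semiprime_in_def Lambda_fi_def by blast
  qed
  define nxt where "nxt y = (SOME z. z \<in> ?sq y \<and> z \<notin> S)" for y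
  define xs where "xs n = (nxt ^^ n) x" for n
  have nxt: "nxt y \<in> ?sq y \<and> nxt y \<notin> S" if "y \<in> carrier M" "y \<notin> S" for y
    unfolding nxt_def using someI_ex[OF step[OF that]] .
  have sq_carrier: "?sq y \<subseteq> carrier M" if "y \<in> carrier M" for y
    using prodM_subset_left fully_invariantD(3) fully_invariant_fi_hull[OF that] by blast
  have inv: "xs n \<in> carrier M \<and> xs n \<notin> S" for n
  proof (induction n)
    case 0 then show ?case using x by (simp add: xs_def)
  next
    case (Suc n) then show ?case using nxt sq_carrier by (fastforce simp: xs_def)
  qed
  show ?thesis
  proof
    show "xs 0 = x" by (simp add: xs_def)
    show "xs n \<in> carrier M" "xs n \<notin> S" for n using inv by auto
    show "xs (Suc n) \<in> ?sq (xs n)" for n using nxt inv by (simp add: xs_def)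
  qed
qed

lemma maximal_fully_invariant_avoiding:
  assumes S: "fully_invariant R M S" and SX: "S \<inter> X = {}"
  obtains P where "fully_invariant R M P" "S \<subseteq> P" "P \<inter> X = {}"
    "\<And>K. fully_invariant R M K \<Longrightarrow> P \<subseteq> K \<Longrightarrow> K \<inter> X = {} \<Longrightarrow> K = P"
proof -
  define A where "A = {P. fully_invariant R M P \<and> S \<subseteq> P \<and> P \<inter> X = {}}"
  have "\<exists>P\<in>A. \<forall>K\<in>A. P \<subseteq> K \<longrightarrow> K = P"
  proof (rule Zorn_Lemma2, intro ballI)
    fix C assume C: "C \<in> chains A"
    then have CA: "C \<subseteq> A" by (rule chainsD2)
    show "\<exists>U\<in>A. \<forall>K\<in>C. K \<subseteq> U"
    proof (cases "C = {}")
      case True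
      then show ?thesis using S SX unfolding A_def by blast
    next
      case False
      have "C \<in> chains {K. fully_invariant R M K}"
        using C CA unfolding chains_def A_def by blast
      then have "fully_invariant R M (\<Union>C)" using False by (rule fully_invariant_Union_chain)
      moreover have "S \<subseteq> \<Union>C" using CA False unfolding A_def by blast
      moreover have "\<Union>C \<inter> X = {}" using CA unfolding A_def by blast
      ultimately have "\<Union>C \<in> A" unfolding A_def by blast
      then show ?thesis by blast
    qed
  qed
  then obtain P where P: "P \<in> A" and max: "\<And>K. K \<in> A \<Longrightarrow> P \<subseteq> K \<Longrightarrow> K = P" by blast
  have "K = P" if "fully_invariant R M K" "P \<subseteq> K" "K \<inter> X = {}" for K
    using P that by (intro max) (auto simp: A_def)
  with P show ?thesis using that unfolding A_def by blast
qed

end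

context sum_lifting_module
begin

text \<open>If \<open>N\<close> and \<open>L\<close> are not below \<open>P\<close>, maximality puts some hull of the sequence into both
  \<open>P + N\<close> and \<open>P + L\<close>, and then \<open>prodM_set_add_subset\<close> puts the next point of the sequence
  into \<open>P\<close>.\<close>

lemma LgSpec_if_maximal_avoiding:
  assumes P: "fully_invariant R M P" and avoid: "\<And>n. xs n \<notin> P"
    and xsM: "\<And>n. xs n \<in> carrier M"
    and step: "\<And>n. xs (Suc n) \<in> prodM R M (fi_hull R M (xs n)) (fi_hull R M (xs n))"
    and max: "\<And>K. fully_invariant R M K \<Longrightarrow> P \<subseteq> K \<Longrightarrow> \<forall>n. xs n \<notin> K \<Longrightarrow> K = P"
  shows "P \<in> LgSpec R M"
proof -
  let ?H = "\<lambda>n. fi_hull R M (xs n)"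
  have H_fi: "fully_invariant R M (?H n)" for n using fully_invariant_fi_hull[OF xsM] .
  have "?H (Suc n) \<subseteq> ?H n" for n
    using fi_hull_least[OF H_fi[of n]] step[of n] prodM_subset_left[OF H_fi[of n]] by blast
  then have H_antimono: "i \<le> k \<Longrightarrow> ?H k \<subseteq> ?H i" for i k
    by (rule lift_Suc_antimono_le)
  have escape: "\<exists>i. ?H i \<subseteq> P <+>\<^bsub>M\<^esub> N" if N: "fully_invariant R M N" and NP: "\<not> N \<subseteq> P" for N
  proof -
    note PN = fully_invariant_set_add[OF P N]
    note subs = set_add_upper[OF fully_invariantD(1)[OF P] fully_invariantD(1)[OF N]]
    have "P <+>\<^bsub>M\<^esub> N \<noteq> P" using subs(2) NP by blast
    then obtain i where "xs i \<in> P <+>\<^bsub>M\<^esub> N" using max[OF PN subs(1)] by blast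
    then show ?thesis using fi_hull_least[OF PN] by blast
  qed
  have "N \<subseteq> P \<or> L \<subseteq> P"
    if N: "N \<in> Lambda_fi R M" and L: "L \<in> Lambda_fi R M" and NL: "prodM R M N L \<subseteq> P" for N L
  proof (rule ccontr)
    assume "\<not> (N \<subseteq> P \<or> L \<subseteq> P)"
    then obtain i j where i: "?H i \<subseteq> P <+>\<^bsub>M\<^esub> N" and j: "?H j \<subseteq> P <+>\<^bsub>M\<^esub> L"
      using escape N L unfolding Lambda_fi_def by blast
    define k where "k = max i j"
    have "?H k \<subseteq> P <+>\<^bsub>M\<^esub> N" "?H k \<subseteq> P <+>\<^bsub>M\<^esub> L"
      using i j H_antimono[of i k] H_antimono[of j k] unfolding k_def by auto
    then have "prodM R M (?H k) (?H k) \<subseteq> prodM R M (P <+>\<^bsub>M\<^esub> N) (P <+>\<^bsub>M\<^esub> L)"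
      using prodM_mono fully_invariantD(3)[OF fully_invariant_set_add[OF P]] N
      unfolding Lambda_fi_def by blast
    also have "\<dots> \<subseteq> P"
      using prodM_set_add_subset[OF P _ _ NL] N L fully_invariantD(1) unfolding Lambda_fi_def by blast
    finally show False using step[of k] avoid[of "Suc k"] by blast
  qed
  moreover have "P \<noteq> carrier M" using avoid xsM by blast
  ultimately show ?thesis unfolding LgSpec_def using fully_invariantD(1)[OF P] by blast
qed

lemma LgSpec_above_semiprime:
  assumes S: "semiprime_in R M S" and x: "x \<in> carrier M" "x \<notin> S"
  obtains P where "P \<in> LgSpec R M" "S \<subseteq> P" "x \<notin> P"
proof -
  obtain xs where xs0: "xs 0 = x" and xsM: "\<And>n. xs n \<in> carrier M" and xsS: "\<And>n. xs n \<notin> S"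
    and step: "\<And>n. xs (Suc n) \<in> prodM R M (fi_hull R M (xs n)) (fi_hull R M (xs n))"
    using semiprime_sequence[OF S x] by blast
  have S_fi: "fully_invariant R M S" using S unfolding semiprime_in_def Lambda_fi_def by blast
  have "S \<inter> range xs = {}" using xsS by blast
  then obtain P where P: "fully_invariant R M P" "S \<subseteq> P" "P \<inter> range xs = {}"
    and max: "\<And>K. fully_invariant R M K \<Longrightarrow> P \<subseteq> K \<Longrightarrow> K \<inter> range xs = {} \<Longrightarrow> K = P"
    using maximal_fully_invariant_avoiding[OF S_fi] by blast
  have avoid: "xs n \<notin> P" for n using P(3) by blast
  have "K = P" if "fully_invariant R M K" "P \<subseteq> K" "\<forall>n. xs n \<notin> K" for K
    using max that by blast
  then have "P \<in> LgSpec R M" by (rule LgSpec_if_maximal_avoiding[where xs = xs, OF P(1) avoid xsM step])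
  then show ?thesis using that P xs0 by blast
qed

end

section \<open>The spectrum \<open>LgSpec(M)\<close> and its open sets\<close>

context lmodule
begin

lemma LgSpecD:
  "P \<in> LgSpec R M \<Longrightarrow> submodule P R M"
  "P \<in> LgSpec R M \<Longrightarrow> P \<subseteq> carrier M"
  "P \<in> LgSpec R M \<Longrightarrow> P \<noteq> carrier M"
  "P \<in> LgSpec R M \<Longrightarrow> N \<in> Lambda_fi R M \<Longrightarrow> L \<in> Lambda_fi R M \<Longrightarrow> prodM R M N L \<subseteq> P \<Longrightarrow>
     N \<subseteq> P \<or> L \<subseteq> P"
  unfolding LgSpec_def using submodule_closedD(1) by blast+

lemma Lambda_fi_prodM: "N \<in> Lambda_fi R M \<Longrightarrow> L \<in> Lambda_fi R M \<Longrightarrow> prodM R M N L \<in> Lambda_fi R M"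
  unfolding Lambda_fi_def using fully_invariant_prodM fully_invariantD(3) by blast

lemma Lambda_fi_submod_sum: "\<N> \<subseteq> Lambda_fi R M \<Longrightarrow> submod_sum R M \<N> \<in> Lambda_fi R M"
  unfolding Lambda_fi_def using fully_invariant_submod_sum by blast

lemma Uopen_Int:
  assumes N: "N \<in> Lambda_fi R M" and L: "L \<in> Lambda_fi R M"
  shows "Uopen R M N \<inter> Uopen R M L = Uopen R M (prodM R M N L)"
proof -
  have "prodM R M N L \<subseteq> N" "prodM R M N L \<subseteq> L"
    using N L prodM_subset_left prodM_subset_right fully_invariantD(1,3)
    unfolding Lambda_fi_def by blast+
  then show ?thesis unfolding Uopen_def using LgSpecD(4)[OF _ N L] by blast
qed

lemma Uopen_Union:
  assumes "\<N> \<subseteq> Lambda_fi R M"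
  shows "\<Union>(Uopen R M ` \<N>) = Uopen R M (submod_sum R M \<N>)"
proof -
  have "\<Union>\<N> \<subseteq> carrier M" using assms fully_invariantD(3) unfolding Lambda_fi_def by blast
  then have "\<not> submod_sum R M \<N> \<subseteq> P \<longleftrightarrow> (\<exists>N\<in>\<N>. \<not> N \<subseteq> P)" if "P \<in> LgSpec R M" for P
    using submod_sum_upper submod_sum_least[OF LgSpecD(1)[OF that]] by blast
  then show ?thesis unfolding Uopen_def by blast
qed

theorem istopology_LgOpens: "istopology (\<lambda>U. U \<in> LgOpens R M)"
  unfolding istopology_def
proof (intro conjI allI impI)
  fix U V assume "U \<in> LgOpens R M" "V \<in> LgOpens R M"
  then obtain N L where N: "N \<in> Lambda_fi R M" "U = Uopen R M N"
    and L: "L \<in> Lambda_fi R M" "V = Uopen R M L"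
    unfolding LgOpens_def by blast
  then have "U \<inter> V = Uopen R M (prodM R M N L)" using Uopen_Int by simp
  then show "U \<inter> V \<in> LgOpens R M"
    unfolding LgOpens_def using Lambda_fi_prodM[OF N(1) L(1)] by blast
next
  fix \<K> assume \<K>: "\<forall>U\<in>\<K>. U \<in> LgOpens R M"
  define \<N> where "\<N> = {N \<in> Lambda_fi R M. Uopen R M N \<in> \<K>}"
  have \<N>: "\<N> \<subseteq> Lambda_fi R M" unfolding \<N>_def by blast
  have "\<K> = Uopen R M ` \<N>" using \<K> by (auto simp: \<N>_def LgOpens_def)
  then have "\<Union>\<K> = Uopen R M (submod_sum R M \<N>)" using Uopen_Union[OF \<N>] by simp
  then show "\<Union>\<K> \<in> LgOpens R M"
    unfolding LgOpens_def using Lambda_fi_submod_sum[OF \<N>] by blast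
qed

lemma semiprime_if_LgSpec: "P \<in> LgSpec R M \<Longrightarrow> P \<in> Lambda_fi R M \<Longrightarrow> semiprime_in R M P"
  unfolding semiprime_in_def using LgSpecD(3,4) by blast

lemma LgSpec_fi_core:
  assumes P: "P \<in> LgSpec R M"
  defines "Q \<equiv> submod_sum R M {K \<in> Lambda_fi R M. K \<subseteq> P}"
  shows "Q \<in> LgSpec R M" "Q \<in> Lambda_fi R M" "Q \<subseteq> P"
    and "\<And>K. K \<in> Lambda_fi R M \<Longrightarrow> K \<subseteq> P \<Longrightarrow> K \<subseteq> Q"
proof -
  show Q: "Q \<in> Lambda_fi R M" unfolding Q_def by (rule Lambda_fi_submod_sum) blast
  show QP: "Q \<subseteq> P" unfolding Q_def by (rule submod_sum_least[OF LgSpecD(1)[OF P]]) blast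
  show upper: "K \<subseteq> Q" if "K \<in> Lambda_fi R M" "K \<subseteq> P" for K
    unfolding Q_def by (rule submod_sum_upper) (use that LgSpecD(2)[OF P] in blast)+
  show "Q \<in> LgSpec R M"
    unfolding LgSpec_def
  proof (intro CollectI conjI ballI impI)
    show "submodule Q R M" using Q fully_invariantD(1) unfolding Lambda_fi_def by blast
    show "Q \<noteq> carrier M" using QP LgSpecD(2,3)[OF P] by blast
    fix N L assume N: "N \<in> Lambda_fi R M" and L: "L \<in> Lambda_fi R M" and "prodM R M N L \<subseteq> Q"
    then have "N \<subseteq> P \<or> L \<subseteq> P" using LgSpecD(4)[OF P N L] QP by blast
    then show "N \<subseteq> Q \<or> L \<subseteq> Q" using upper[OF N] upper[OF L] by blast
  qed
qed

lemma SP_carrier: "carrier M \<in> SP R M"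
  unfolding SP_def by blast

lemma SP_fully_invariant: "N \<in> SP R M \<Longrightarrow> N \<in> Lambda_fi R M"
  unfolding SP_def semiprime_in_def Lambda_fi_def using fully_invariant_carrier by blast

lemma SP_Inter:
  assumes F: "F \<subseteq> SP R M"
  shows "carrier M \<inter> \<Inter>F \<in> SP R M"
proof (cases "F \<subseteq> {carrier M}")
  case True
  then have "carrier M \<inter> \<Inter>F = carrier M" by blast
  then show ?thesis using SP_carrier by simp
next
  case False
  then obtain N0 where N0: "N0 \<in> F" "N0 \<noteq> carrier M" by blast
  have fi: "fully_invariant R M N" if "N \<in> F" for N
    using SP_fully_invariant F that unfolding Lambda_fi_def by blast
  have eq: "carrier M \<inter> \<Inter>F = \<Inter>F" using N0 fi fully_invariantD(3) by blast
  have "semiprime_in R M (\<Inter>F)"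
    unfolding semiprime_in_def
  proof (intro conjI ballI impI)
    show "\<Inter>F \<in> Lambda_fi R M" using fully_invariant_Inter[of F] N0 fi unfolding Lambda_fi_def by blast
    show "\<Inter>F \<noteq> carrier M" using N0 fi fully_invariantD(3) by blast
    fix K assume K: "K \<in> Lambda_fi R M" and KK: "prodM R M K K \<subseteq> \<Inter>F"
    have "K \<subseteq> N" if "N \<in> F" for N
    proof (cases "N = carrier M")
      case True then show ?thesis using K fully_invariantD(3) unfolding Lambda_fi_def by blast
    next
      case False
      then have "semiprime_in R M N" using F that unfolding SP_def by blast
      then show ?thesis using K KK that unfolding semiprime_in_def by blast
    qed
    then show "K \<subseteq> \<Inter>F" by blast
  qed
  then show ?thesis using eq unfolding SP_def by simp
qed

end

context sum_lifting_module
begin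

lemma Uopen_subset_iff:
  assumes N: "N \<in> Lambda_fi R M" and N': "N' \<in> SP R M"
  shows "Uopen R M N \<subseteq> Uopen R M N' \<longleftrightarrow> N \<subseteq> N'"
proof
  assume U: "Uopen R M N \<subseteq> Uopen R M N'"
  show "N \<subseteq> N'"
  proof (cases "N' = carrier M")
    case True then show ?thesis using N fully_invariantD(3) unfolding Lambda_fi_def by blast
  next
    case False
    then have semi: "semiprime_in R M N'" using N' unfolding SP_def by blast
    show ?thesis
    proof
      fix y assume y: "y \<in> N"
      then have "y \<in> carrier M" using N fully_invariantD(3) unfolding Lambda_fi_def by blast
      show "y \<in> N'"
      proof (rule ccontr)
        assume "y \<notin> N'"
        then obtain P where "P \<in> LgSpec R M" "N' \<subseteq> P" "y \<notin> P"
          using LgSpec_above_semiprime[OF semi \<open>y \<in> carrier M\<close>] by blast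
        then show False using U y unfolding Uopen_def by blast
      qed
    qed
  qed
qed (auto simp: Uopen_def)

lemma Uopen_SP_eq: "Uopen R M ` SP R M = LgOpens R M"
proof
  show "Uopen R M ` SP R M \<subseteq> LgOpens R M"
    unfolding LgOpens_def using SP_fully_invariant by blast
  show "LgOpens R M \<subseteq> Uopen R M ` SP R M"
  proof
    fix U assume "U \<in> LgOpens R M"
    then obtain N where N: "N \<in> Lambda_fi R M" and U: "U = Uopen R M N" unfolding LgOpens_def by blast
    define N' where "N' = carrier M \<inter> \<Inter>{P \<in> LgSpec R M. P \<in> Lambda_fi R M \<and> N \<subseteq> P}"
    have "N' \<in> SP R M" unfolding N'_def by (rule SP_Inter) (use semiprime_if_LgSpec SP_def in blast)
    moreover have "Uopen R M N' = Uopen R M N"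
    proof
      have "N \<subseteq> N'" using N fully_invariantD(3) unfolding N'_def Lambda_fi_def by blast
      then show "Uopen R M N \<subseteq> Uopen R M N'" unfolding Uopen_def by blast
      show "Uopen R M N' \<subseteq> Uopen R M N"
      proof
        fix P assume P: "P \<in> Uopen R M N'"
        then have PL: "P \<in> LgSpec R M" unfolding Uopen_def by blast
        have "N' \<subseteq> P" if "N \<subseteq> P"
          using LgSpec_fi_core[OF PL] N that unfolding N'_def by blast
        then show "P \<in> Uopen R M N" using P unfolding Uopen_def by blast
      qed
    qed
    ultimately show "U \<in> Uopen R M ` SP R M" using U by blast
  qed
qed

lemma bij_betw_Uopen_SP: "bij_betw (Uopen R M) (SP R M) (LgOpens R M)"
proof (rule bij_betw_imageI[OF inj_onI Uopen_SP_eq])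
  fix N N' assume "N \<in> SP R M" "N' \<in> SP R M" "Uopen R M N = Uopen R M N'"
  then show "N = N'" using Uopen_subset_iff SP_fully_invariant by blast
qed

end

section \<open>Projectivity in \<open>\<sigma>[M]\<close> implies lifting through sums\<close>

text \<open>To apply the projectivity hypothesis, the direct sum \<open>M \<oplus> M\<close> has to be realised on the type
  \<open>('a \<times> nat) set\<close> that the hypothesis quantifies over: the pair \<open>(x, y)\<close> is coded as the set
  \<open>{(x, 0), (y, 1)}\<close>.\<close>

definition code_pair :: "'a \<Rightarrow> 'a \<Rightarrow> ('a \<times> nat) set" where
  "code_pair x y = {(x, 0), (y, 1)}"

definition code_fst :: "('a \<times> nat) set \<Rightarrow> 'a" where
  "code_fst s = (THE x. (x, 0) \<in> s)"

definition code_snd :: "('a \<times> nat) set \<Rightarrow> 'a" where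
  "code_snd s = (THE y. (y, 1) \<in> s)"

lemma code_fst_pair [simp]: "code_fst (code_pair x y) = x"
  unfolding code_fst_def code_pair_def by auto

lemma code_snd_pair [simp]: "code_snd (code_pair x y) = y"
  unfolding code_snd_def code_pair_def by auto

lemma code_pair_eq_iff [simp]: "code_pair x y = code_pair x' y' \<longleftrightarrow> x = x' \<and> y = y'"
  by (metis code_fst_pair code_snd_pair)

definition pair_submodule :: "'a set \<Rightarrow> 'a set \<Rightarrow> ('a \<times> nat) set set" where
  "pair_submodule P L = {code_pair p l | p l. p \<in> P \<and> l \<in> L}"

lemma code_pair_mem_pair_submodule [simp]: "code_pair p l \<in> pair_submodule P L \<longleftrightarrow> p \<in> P \<and> l \<in> L"
  by (auto simp: pair_submodule_def)

lemma pair_submoduleE: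
  assumes "s \<in> pair_submodule P L"
  obtains p l where "s = code_pair p l" "p \<in> P" "l \<in> L"
  using assms by (auto simp: pair_submodule_def)

lemma pair_submodule_mono: "P \<subseteq> P' \<Longrightarrow> L \<subseteq> L' \<Longrightarrow> pair_submodule P L \<subseteq> pair_submodule P' L'"
  by (auto simp: pair_submodule_def)

text \<open>The multiplicative fields are required by the record type and carry no meaning.\<close>

definition double_module :: "('r, 'a) module \<Rightarrow> ('r, ('a \<times> nat) set) module" where
  "double_module M =
    \<lparr>carrier = pair_submodule (carrier M) (carrier M),
     monoid.mult = (\<lambda>s t. s), one = code_pair \<zero>\<^bsub>M\<^esub> \<zero>\<^bsub>M\<^esub>, zero = code_pair \<zero>\<^bsub>M\<^esub> \<zero>\<^bsub>M\<^esub>,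
     add = (\<lambda>s t. code_pair (code_fst s \<oplus>\<^bsub>M\<^esub> code_fst t) (code_snd s \<oplus>\<^bsub>M\<^esub> code_snd t)),
     smult = (\<lambda>r s. code_pair (r \<odot>\<^bsub>M\<^esub> code_fst s) (r \<odot>\<^bsub>M\<^esub> code_snd s))\<rparr>"

lemma double_module_simps [simp]:
  "carrier (double_module M) = pair_submodule (carrier M) (carrier M)"
  "\<zero>\<^bsub>double_module M\<^esub> = code_pair \<zero>\<^bsub>M\<^esub> \<zero>\<^bsub>M\<^esub>"
  "code_pair a b \<oplus>\<^bsub>double_module M\<^esub> code_pair c d = code_pair (a \<oplus>\<^bsub>M\<^esub> c) (b \<oplus>\<^bsub>M\<^esub> d)"
  "r \<odot>\<^bsub>double_module M\<^esub> code_pair a b = code_pair (r \<odot>\<^bsub>M\<^esub> a) (r \<odot>\<^bsub>M\<^esub> b)"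
  by (simp_all add: double_module_def)

lemma mod_hom_restrict:
  "f \<in> mod_hom R X Y \<Longrightarrow> H \<subseteq> carrier X \<Longrightarrow> f ` H \<subseteq> K \<Longrightarrow>
    f \<in> mod_hom R (X\<lparr>carrier := H\<rparr>) (Y\<lparr>carrier := K\<rparr>)"
  unfolding mod_hom_def by (auto simp: subset_iff)

lemma mod_hom_restrict_codomain:
  "f \<in> mod_hom R X (Y\<lparr>carrier := K\<rparr>) \<Longrightarrow> K \<subseteq> carrier Y \<Longrightarrow> f \<in> mod_hom R X Y"
  unfolding mod_hom_def by auto

lemma restrict_left_module:
  assumes X: "left_module R X" and H: "submodule H R X"
  shows "left_module R (X\<lparr>carrier := H\<rparr>)"
proof -
  interpret X: lmodule R X by (rule lmodule.intro[OF X])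
  note h = submodule_closedD[OF H]
  have "abelian_group (X\<lparr>carrier := H\<rparr>)"
  proof (rule abelian_groupI)
    fix x assume "x \<in> carrier (X\<lparr>carrier := H\<rparr>)"
    then show "\<exists>y\<in>carrier (X\<lparr>carrier := H\<rparr>). y \<oplus>\<^bsub>X\<lparr>carrier := H\<rparr>\<^esub> x = \<zero>\<^bsub>X\<lparr>carrier := H\<rparr>\<^esub>"
      using h(1,4) by (intro bexI[of _ "\<ominus>\<^bsub>X\<^esub> x"]) (auto simp: X.M.l_neg)
  qed (use h(1-3) in \<open>auto simp: X.M.a_ac subset_iff\<close>)
  then show ?thesis
    using X h(1,5) unfolding left_module_def by (auto simp: subset_iff)
qed

context lmodule
begin

lemma double_module_left_module: "left_module R (double_module M)"
proof -
  have "abelian_group (double_module M)"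
  proof (rule abelian_groupI)
    fix s assume "s \<in> carrier (double_module M)"
    then obtain a b where "s = code_pair a b" "a \<in> carrier M" "b \<in> carrier M"
      by (auto elim: pair_submoduleE)
    then show "\<exists>t\<in>carrier (double_module M). t \<oplus>\<^bsub>double_module M\<^esub> s = \<zero>\<^bsub>double_module M\<^esub>"
      by (intro bexI[of _ "code_pair (\<ominus>\<^bsub>M\<^esub> a) (\<ominus>\<^bsub>M\<^esub> b)"]) (auto simp: M.l_neg)
  qed (auto elim!: pair_submoduleE simp: M.a_ac)
  then show ?thesis
    unfolding left_module_def using ring_R
    by (auto elim!: pair_submoduleE
        simp: smult_closed smult_l_distr smult_r_distr smult_assoc smult_one)
qed

lemma pair_submodule_submodule:
  assumes P: "submodule P R M" and L: "submodule L R M"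
  shows "submodule (pair_submodule P L) R (double_module M)"
proof -
  interpret D: lmodule R "double_module M" by (rule lmodule.intro[OF double_module_left_module])
  note p = submodule_closedD[OF P] and l = submodule_closedD[OF L]
  show ?thesis
  proof (rule submodule_closedI)
    fix s assume "s \<in> pair_submodule P L"
    then obtain a b where s: "s = code_pair a b" "a \<in> P" "b \<in> L" by (rule pair_submoduleE)
    have "code_pair (\<ominus>\<^bsub>M\<^esub> a) (\<ominus>\<^bsub>M\<^esub> b) \<oplus>\<^bsub>double_module M\<^esub> s = \<zero>\<^bsub>double_module M\<^esub>"
      using s p(1) l(1) by (auto simp: M.l_neg)
    then have "\<ominus>\<^bsub>double_module M\<^esub> s = code_pair (\<ominus>\<^bsub>M\<^esub> a) (\<ominus>\<^bsub>M\<^esub> b)"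
      using s p(1) l(1) by (intro D.M.minus_equality) auto
    then show "\<ominus>\<^bsub>double_module M\<^esub> s \<in> pair_submodule P L" using s p(4) l(4) by simp
  qed (use p l in \<open>auto elim!: pair_submoduleE simp: subset_iff\<close>)
qed

lemma zero_submodule: "submodule {\<zero>\<^bsub>M\<^esub>} R M"
  by (rule submodule_closedI) (auto simp: smult_zero)

lemma code_inl_mod_hom: "(\<lambda>x. code_pair x \<zero>\<^bsub>M\<^esub>) \<in> mod_hom R M (double_module M)"
  unfolding mod_hom_def by (auto simp: smult_zero)

lemma code_inr_mod_hom: "(\<lambda>y. code_pair \<zero>\<^bsub>M\<^esub> y) \<in> mod_hom R M (double_module M)"
  unfolding mod_hom_def by (auto simp: smult_zero)

lemma code_snd_mod_hom: "code_snd \<in> mod_hom R (double_module M) M"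
  unfolding mod_hom_def by (auto elim!: pair_submoduleE)

lemma code_sum_mod_hom: "(\<lambda>s. code_fst s \<oplus>\<^bsub>M\<^esub> code_snd s) \<in> mod_hom R (double_module M) M"
  unfolding mod_hom_def by (auto elim!: pair_submoduleE simp: M.a_ac smult_r_distr)

lemma double_module_generated_by: "generated_by R M (double_module M)"
  unfolding generated_by_def
proof (intro conjI double_module_left_module)
  interpret D: lmodule R "double_module M" by (rule lmodule.intro[OF double_module_left_module])
  let ?F = "{f ` carrier M | f. f \<in> mod_hom R M (double_module M)}"
  have F: "\<Union>?F \<subseteq> carrier (double_module M)" unfolding mod_hom_def by auto
  show "carrier (double_module M) = submod_sum R (double_module M) ?F"
  proof
    show "submod_sum R (double_module M) ?F \<subseteq> carrier (double_module M)"
      by (rule submod_sum_least[OF D.carrier_submodule F])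
    show "carrier (double_module M) \<subseteq> submod_sum R (double_module M) ?F"
    proof
      fix s assume "s \<in> carrier (double_module M)"
      then obtain x y where s: "s = code_pair x y" "x \<in> carrier M" "y \<in> carrier M"
        by (auto elim: pair_submoduleE)
      note sum = submodule_closedD[OF D.submod_sum_submodule[OF F]]
      have "code_pair x \<zero>\<^bsub>M\<^esub> \<in> submod_sum R (double_module M) ?F"
        using D.submod_sum_upper[OF F] code_inl_mod_hom s(2) by blast
      moreover have "code_pair \<zero>\<^bsub>M\<^esub> y \<in> submod_sum R (double_module M) ?F"
        using D.submod_sum_upper[OF F] code_inr_mod_hom s(3) by blast
      ultimately show "s \<in> submod_sum R (double_module M) ?F" using sum(3) s by fastforce
    qed
  qed
qed

lemma in_sigma_pair_submodule:
  assumes "submodule P R M" "submodule L R M"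
  shows "in_sigma R M ((double_module M)\<lparr>carrier := pair_submodule P L\<rparr>)"
  unfolding in_sigma_def
proof (intro conjI exI bexI)
  have H: "submodule (pair_submodule P L) R (double_module M)"
    by (rule pair_submodule_submodule[OF assms])
  show "left_module R ((double_module M)\<lparr>carrier := pair_submodule P L\<rparr>)"
    by (rule restrict_left_module[OF double_module_left_module H])
  show "generated_by R M (double_module M)" by (rule double_module_generated_by)
  show "id \<in> mod_hom R ((double_module M)\<lparr>carrier := pair_submodule P L\<rparr>) (double_module M)"
    using submodule_closedD(1)[OF H] unfolding mod_hom_def by auto
qed simp

lemma pair_sum_epimorphism:
  assumes P: "submodule P R M" and L: "submodule L R M"
  defines "g \<equiv> \<lambda>s. code_pair (code_fst s \<oplus>\<^bsub>M\<^esub> code_snd s) \<zero>\<^bsub>M\<^esub>"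
  shows "g \<in> mod_hom R ((double_module M)\<lparr>carrier := pair_submodule P L\<rparr>)
                       ((double_module M)\<lparr>carrier := pair_submodule (P <+>\<^bsub>M\<^esub> L) {\<zero>\<^bsub>M\<^esub>}\<rparr>)"
    and "g ` pair_submodule P L = pair_submodule (P <+>\<^bsub>M\<^esub> L) {\<zero>\<^bsub>M\<^esub>}"
proof -
  show onto: "g ` pair_submodule P L = pair_submodule (P <+>\<^bsub>M\<^esub> L) {\<zero>\<^bsub>M\<^esub>}"
  proof
    show "g ` pair_submodule P L \<subseteq> pair_submodule (P <+>\<^bsub>M\<^esub> L) {\<zero>\<^bsub>M\<^esub>}"
      unfolding g_def by (auto elim!: pair_submoduleE intro: set_add_memI)
    show "pair_submodule (P <+>\<^bsub>M\<^esub> L) {\<zero>\<^bsub>M\<^esub>} \<subseteq> g ` pair_submodule P L"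
    proof
      fix s assume "s \<in> pair_submodule (P <+>\<^bsub>M\<^esub> L) {\<zero>\<^bsub>M\<^esub>}"
      then obtain a b where "s = code_pair (a \<oplus>\<^bsub>M\<^esub> b) \<zero>\<^bsub>M\<^esub>" "a \<in> P" "b \<in> L"
        by (auto simp: mem_set_add_iff elim!: pair_submoduleE)
      then show "s \<in> g ` pair_submodule P L"
        unfolding g_def by (auto intro!: image_eqI[of _ _ "code_pair a b"])
    qed
  qed
  have "g = (\<lambda>x. code_pair x \<zero>\<^bsub>M\<^esub>) \<circ> (\<lambda>s. code_fst s \<oplus>\<^bsub>M\<^esub> code_snd s)"
    unfolding g_def by (simp add: comp_def)
  then have "g \<in> mod_hom R (double_module M) (double_module M)"
    using mod_hom_comp[OF code_sum_mod_hom code_inl_mod_hom] by simp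
  then show "g \<in> mod_hom R ((double_module M)\<lparr>carrier := pair_submodule P L\<rparr>)
                       ((double_module M)\<lparr>carrier := pair_submodule (P <+>\<^bsub>M\<^esub> L) {\<zero>\<^bsub>M\<^esub>}\<rparr>)"
    using onto pair_submodule_mono[OF submodule_closedD(1)[OF P] submodule_closedD(1)[OF L]]
    by (intro mod_hom_restrict) auto
qed

lemma code_snd_hom_into:
  assumes P: "submodule P R M" and L: "submodule L R M"
    and h: "h \<in> mod_hom R M ((double_module M)\<lparr>carrier := pair_submodule P L\<rparr>)"
  shows "code_snd \<circ> h \<in> hom_into R M L"
proof -
  have "pair_submodule P L \<subseteq> carrier (double_module M)"
    using pair_submodule_mono[OF submodule_closedD(1)[OF P] submodule_closedD(1)[OF L]] by simp
  then have "code_snd \<circ> h \<in> mod_hom R M M"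
    using mod_hom_comp[OF mod_hom_restrict_codomain[OF h] code_snd_mod_hom] by simp
  moreover have "code_snd (h x) \<in> L" if "x \<in> carrier M" for x
  proof -
    have "h x \<in> pair_submodule P L" using h that unfolding mod_hom_def by auto
    then show ?thesis by (auto elim: pair_submoduleE)
  qed
  ultimately show ?thesis unfolding hom_into_def by auto
qed

text \<open>Lift \<open>x \<mapsto> (f x, 0)\<close> along the epimorphism \<open>P \<oplus> L \<rightarrow> (P + L) \<oplus> 0\<close>,
  \<open>(p, l) \<mapsto> (p + l, 0)\<close>; the second component of the lift is the required map into \<open>L\<close>.\<close>

theorem sum_lifting_if_projective_in_sigma:
  assumes proj: "projective_in_sigma R M TYPE(('a \<times> nat) set)"
  shows "sum_lifting_module R M"
proof (unfold_locales)
  fix P L f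
  assume P: "submodule P R M" and L: "submodule L R M" and f: "f \<in> mod_hom R M M"
    and fPL: "f ` carrier M \<subseteq> P <+>\<^bsub>M\<^esub> L"
  define A where "A = (double_module M)\<lparr>carrier := pair_submodule P L\<rparr>"
  define B where "B = (double_module M)\<lparr>carrier := pair_submodule (P <+>\<^bsub>M\<^esub> L) {\<zero>\<^bsub>M\<^esub>}\<rparr>"
  define g where "g = (\<lambda>s. code_pair (code_fst s \<oplus>\<^bsub>M\<^esub> code_snd s) \<zero>\<^bsub>M\<^esub>)"
  note p = submodule_closedD[OF P] and l = submodule_closedD[OF L]
  have PL: "submodule (P <+>\<^bsub>M\<^esub> L) R M" by (rule set_add_submodule[OF P L])
  have sigma: "in_sigma R M A" "in_sigma R M B"
    unfolding A_def B_def using in_sigma_pair_submodule P L PL zero_submodule by auto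
  have g: "g \<in> mod_hom R A B" and g_onto: "g ` carrier A = carrier B"
    unfolding A_def B_def g_def using pair_sum_epimorphism[OF P L] by simp_all
  have "(\<lambda>x. code_pair x \<zero>\<^bsub>M\<^esub>) \<circ> f \<in> mod_hom R M (double_module M)"
    by (rule mod_hom_comp[OF f code_inl_mod_hom])
  then have f': "(\<lambda>x. code_pair (f x) \<zero>\<^bsub>M\<^esub>) \<in> mod_hom R M B"
    using fPL submodule_closedD(1)[OF PL] p(1) l(1) unfolding B_def mod_hom_def
    by (auto simp: subset_iff)
  obtain h where h: "h \<in> mod_hom R M A" and gh: "\<forall>x\<in>carrier M. g (h x) = code_pair (f x) \<zero>\<^bsub>M\<^esub>"
    using proj[unfolded projective_in_sigma_def, rule_format, OF sigma g g_onto f'] by blast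
  have hA: "h x \<in> pair_submodule P L" if "x \<in> carrier M" for x
    using h that unfolding A_def mod_hom_def by auto
  have "code_snd \<circ> h \<in> hom_into R M L"
    using h unfolding A_def by (rule code_snd_hom_into[OF P L])
  moreover have "f x \<ominus>\<^bsub>M\<^esub> (code_snd \<circ> h) x \<in> P" if x: "x \<in> carrier M" for x
  proof -
    obtain a b where ab: "h x = code_pair a b" "a \<in> P" "b \<in> L" using hA[OF x] by (rule pair_submoduleE)
    then have "f x = a \<oplus>\<^bsub>M\<^esub> b" using gh x unfolding g_def by force
    moreover have "a \<in> carrier M" "b \<in> carrier M" using ab p(1) l(1) by auto
    ultimately show ?thesis using ab by (simp add: a_minus_def M.a_assoc M.r_neg)
  qed
  ultimately show "\<exists>h\<in>hom_into R M L. \<forall>x\<in>carrier M. f x \<ominus>\<^bsub>M\<^esub> h x \<in> P" by blast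
qed

end

theorem proposition4p27:
  fixes R :: "'r ring" and M :: "('r, 'a) module"
  assumes "left_module R M"
    and "projective_in_sigma R M TYPE(('a \<times> nat) set)"
  shows "frame (incl_order (SP R M)) \<and>
         istopology (\<lambda>U. U \<in> LgOpens R M) \<and>
         frame_iso (incl_order (SP R M)) (incl_order (LgOpens R M)) (Uopen R M)"
proof -
  interpret lmodule R M by (rule lmodule.intro) (rule assms(1))
  interpret sum_lifting_module R M by (rule sum_lifting_if_projective_in_sigma[OF assms(2)])
  interpret incl_order_iso "Uopen R M" "SP R M" "LgOpens R M"
    using bij_betw_Uopen_SP Uopen_subset_iff SP_fully_invariant by unfold_locales blast+
  have "frame_iso (incl_order (SP R M)) (incl_order (LgOpens R M)) (Uopen R M)"
    by (rule frame_iso_if_frame[OF frame_incl_order_if_istopology[OF istopology_LgOpens]])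
  then show ?thesis using istopology_LgOpens unfolding frame_iso_def by blast
qed

end
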